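(* Let $\sum_{k=1}^{\infty} a_k z^k$ be a power series (with $a_k \in \mathbb{C}$) that converges uniformly on the unit circle $\mathbb{T}$ to a continuous function $f$ such that $\lambda(\{z \in \mathbb{T} : \operatorname{Re} f(z) = 0\}) = 0$. Let $D = \{k \in \mathbb{N} : a_k \neq 0\}$. Then \[ \alpha(D) \leq \min(\rho_+(f), \rho_-(f)). \]
   Context: $\mathbb{N} = \{1,2,\ldots\}$; $\lambda$ is the normalized Lebesgue measure on $\mathbb{T} = \{z \in \mathbb{C} : |z| = 1\}$ with $\lambda(\mathbb{T}) = 1$. For continuous $f\colon \mathbb{T} \to \mathbb{C}$, $\rho_+(f) = \lambda(\{z \in \mathbb{T} : \operatorname{Re} f(z) > 0\})$ and $\rho_-(f) = \lambda(\{z \in \mathbb{T} : \operatorname{Re} f(z) < 0\})$. For a finite set $E \subset \mathbb{N}$ and $n \geq 1$, the circulant graph $G_n$ with set of distances $E$ has vertex set $\{0, \ldots, n-1\}$, vertices $u, v$ (possibly equal) being adjacent iff $u - v \equiv d$ or $v - u \equiv d \pmod n$ for some $d \in E$; $\alpha(G)$ is the maximum size of an independent set (no two adjacent vertices, no looped vertex); $\alpha(E) := \lim_{n\to\infty} \alpha(G_n)/n$ (which exists). For an arbitrary $D \subseteq \mathbb{N}$, $\alpha(D) := \inf_n \alpha(D \cap \{1, \ldots, n\})$. *)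

theory Defs
  imports "HOL-Analysis.Analysis"
begin

definition circ_measure :: "complex set \<Rightarrow> real" where
  "circ_measure S = measure lebesgue {t \<in> {0..1::real}. cis (2 * pi * t) \<in> S}"

definition rho_plus :: "(complex \<Rightarrow> complex) \<Rightarrow> real" where
  "rho_plus f = circ_measure {z \<in> sphere 0 1. Re (f z) > 0}"

definition rho_minus :: "(complex \<Rightarrow> complex) \<Rightarrow> real" where
  "rho_minus f = circ_measure {z \<in> sphere 0 1. Re (f z) < 0}"

text \<open>Adjacency in the circulant graph G_n on {0..n-1} with distance set E
  (loops allowed).\<close>
definition circ_adj :: "nat \<Rightarrow> nat set \<Rightarrow> nat \<Rightarrow> nat \<Rightarrow> bool" where
  "circ_adj n E u v \<longleftrightarrow> (\<exists>d\<in>E. (int u - int v) mod int n = int d mod int n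
                                 \<or> (int v - int u) mod int n = int d mod int n)"

definition circ_indep :: "nat \<Rightarrow> nat set \<Rightarrow> nat set \<Rightarrow> bool" where
  "circ_indep n E S \<longleftrightarrow> S \<subseteq> {..<n} \<and> (\<forall>u\<in>S. \<forall>v\<in>S. \<not> circ_adj n E u v)"

definition circ_alpha :: "nat \<Rightarrow> nat set \<Rightarrow> nat" where
  "circ_alpha n E = Max {card S | S. circ_indep n E S}"

definition alpha_fin :: "nat set \<Rightarrow> real" where
  "alpha_fin E = lim (\<lambda>n. real (circ_alpha n E) / real n)"

definition alpha_set :: "nat set \<Rightarrow> real" where
  "alpha_set D = (INF n\<in>{1..}. alpha_fin (D \<inter> {1..n}))"

end

theory Submission
  imports Defs "HOL-Library.Log_Nat" "HOL-Real_Asymp.Real_Asymp"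
begin

(* Let P(j) = sum_{k in E} c_k e(jk/n) with e(x) = exp(2 pi i x), and let S be an independent set
   of the circulant graph G_n. Then |S| + #{j < n. Re P(j) > 0} <= n: otherwise some nonzero w
   supported on S has discrete Fourier transform W supported on {Re P > 0}, so that
   Q = sum_j 2 Re P(j) |W(j)|^2 > 0; but expanding |W|^2 over pairs u, v of S gives Q = 0,
   since no frequency +-k + v - u with k in E vanishes modulo n.
   Applying this to the partial sum p_N of the series at the points t + j/n and averaging
   over t gives alpha(G_n)/n <= lambda{Re p_N <= 0} for the distance set D cap [1, N], hence
   alpha(D) <= lambda{Re p_N <= 0}. The limit defining alpha(E) exists because the largest
   subset of [0, L) with no difference in E is subadditive in L and bounds alpha(G_n) from both
   sides. Uniform convergence and continuity of measure from above then give
   alpha(D) <= lambda{Re f <= 0} = rho_-(f), as {Re f = 0} is null; replacing f by -f gives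
   the bound by rho_+(f). *)

section \<open>Fourier analysis on the cyclic group\<close>

lemma homogeneous_system_nontrivial_solution:
  fixes a :: "'r \<Rightarrow> 'j \<Rightarrow> 'a::field"
  assumes "finite R" "finite J" "card R < card J"
  shows "\<exists>b. (\<exists>j\<in>J. b j \<noteq> 0) \<and> (\<forall>r\<in>R. (\<Sum>j\<in>J. a r j * b j) = 0)"
  using assms
proof (induction R arbitrary: J a rule: finite_induct)
  case empty
  then obtain j0 where "j0 \<in> J" by fastforce
  then show ?case by (intro exI[of _ "\<lambda>j. if j = j0 then 1 else 0"]) auto
next
  case (insert r R)
  show ?case
  proof (cases "\<forall>j\<in>J. a r j = 0")
    case True
    with insert show ?thesis by fastforce
  next
    case False
    then obtain j0 where j0: "j0 \<in> J" "a r j0 \<noteq> 0" by auto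
    \<comment> \<open>Eliminate the unknown \<open>j0\<close> using equation \<open>r\<close>, solve the remaining system, back-substitute.\<close>
    define a' where "a' r' j = a r' j - a r' j0 * a r j / a r j0" for r' j
    have "card R < card (J - {j0})" using insert j0 by auto
    with insert.IH[of "J - {j0}" a'] insert.prems obtain b' where
      b': "\<exists>j\<in>J-{j0}. b' j \<noteq> 0" "\<forall>r'\<in>R. (\<Sum>j\<in>J-{j0}. a' r' j * b' j) = 0" by auto
    define b where "b j = (if j = j0 then - (\<Sum>j\<in>J-{j0}. a r j * b' j) / a r j0 else b' j)" for j
    have split: "(\<Sum>j\<in>J. a r' j * b j) = (\<Sum>j\<in>J-{j0}. a r' j * b' j) + a r' j0 * b j0" for r'
      using insert.prems j0 by (simp add: sum.remove[of J j0] b_def add.commute)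
    have "(\<Sum>j\<in>J. a r' j * b j) = 0" if "r' \<in> R" for r'
    proof -
      have "(\<Sum>j\<in>J-{j0}. a' r' j * b' j)
          = (\<Sum>j\<in>J-{j0}. a r' j * b' j) - a r' j0 / a r j0 * (\<Sum>j\<in>J-{j0}. a r j * b' j)"
        by (simp add: a'_def algebra_simps sum_subtractf sum_distrib_left)
      then show ?thesis using b'(2) that j0 by (simp only: split) (simp add: b_def field_simps)
    qed
    moreover have "(\<Sum>j\<in>J. a r j * b j) = 0" using j0 by (simp only: split) (simp add: b_def)
    moreover have "\<exists>j\<in>J. b j \<noteq> 0" using b'(1) by (auto simp: b_def)
    ultimately show ?thesis by auto
  qed
qed

definition e2pi :: "real \<Rightarrow> complex" where
  "e2pi x = cis (2 * pi * x)"

lemma e2pi_add: "e2pi (x + y) = e2pi x * e2pi y"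
  by (simp add: e2pi_def cis_mult distrib_left)

lemma e2pi_minus: "e2pi (- x) = cnj (e2pi x)"
  by (simp add: e2pi_def cis_cnj)

lemma e2pi_of_int: "e2pi (of_int m) = 1"
  by (simp add: e2pi_def)

lemma e2pi_power: "e2pi x ^ k = e2pi (real k * x)"
  unfolding e2pi_def Complex.DeMoivre by (simp add: mult_ac)

lemma e2pi_eq_1_iff: "e2pi x = 1 \<longleftrightarrow> x \<in> \<int>"
proof
  assume "e2pi x = 1"
  then have "cos (2 * pi * x) = 1" by (simp add: e2pi_def complex_eq_iff)
  then obtain q :: int where "2 * pi * x = of_int q * 2 * pi" by (auto simp: cos_one_2pi_int)
  then show "x \<in> \<int>" by (simp add: Ints_of_int)
qed (auto elim: Ints_cases simp: e2pi_of_int)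

lemma sum_e2pi_orthogonality:
  assumes "n \<ge> 1"
  shows "(\<Sum>j<n. e2pi (real j * of_int m / real n)) = (if int n dvd m then of_nat n else 0)"
proof -
  define z where "z = e2pi (of_int m / real n)"
  have powers: "e2pi (real j * of_int m / real n) = z ^ j" for j
    by (simp add: z_def e2pi_power)
  have "z = 1 \<longleftrightarrow> int n dvd m"
  proof -
    have "of_int m / real n \<in> \<int> \<longleftrightarrow> int n dvd m"
      using assms by (metis not_one_le_zero of_int_div_of_int_in_Ints_iff of_int_of_nat_eq of_nat_eq_0_iff)
    then show ?thesis by (simp add: z_def e2pi_eq_1_iff)
  qed
  moreover have "z ^ n = 1" using assms
    by (simp add: z_def e2pi_power e2pi_of_int[of m, symmetric])
  ultimately show ?thesis by (cases "int n dvd m") (simp_all add: powers geometric_sum)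
qed

definition dft :: "nat \<Rightarrow> (nat \<Rightarrow> complex) \<Rightarrow> nat \<Rightarrow> complex" where
  "dft n w j = (\<Sum>v<n. w v * e2pi (real j * real v / real n))"

lemma dft_inverse:
  assumes J: "J \<subseteq> {..<n}" and j: "j < n"
  shows "dft n (\<lambda>u. \<Sum>i\<in>J. b i * e2pi (- (real i * real u / real n))) j
       = (if j \<in> J then of_nat n * b j else 0)"
proof -
  have n: "n \<ge> 1" using j by simp
  have finJ: "finite J" using J finite_subset by blast
  have "dft n (\<lambda>u. \<Sum>i\<in>J. b i * e2pi (- (real i * real u / real n))) j
      = (\<Sum>i\<in>J. b i * (\<Sum>v<n. e2pi (real v * of_int (int j - int i) / real n)))"
    unfolding dft_def sum_distrib_left sum_distrib_right
    by (subst sum.swap) (intro sum.cong refl,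
        simp add: mult.assoc e2pi_add[symmetric] algebra_simps diff_divide_distrib)
  also have "\<dots> = (\<Sum>i\<in>J. b i * (if i = j then of_nat n else 0))"
  proof (intro sum.cong refl)
    fix i assume "i \<in> J"
    then have "i < n" using J by auto
    then have "int n dvd (int j - int i) \<longleftrightarrow> i = j"
      using j by (metis cancel_comm_monoid_add_class.diff_cancel
          diffs0_imp_equal dvd_0_right dvd_imp_le dvd_minus_iff leD less_imp_diff_less minus_diff_eq
          not_gr_zero of_nat_dvd_iff zdiff_int_split)
    then show "b i * (\<Sum>v<n. e2pi (real v * of_int (int j - int i) / real n))
             = b i * (if i = j then of_nat n else 0)"
      using sum_e2pi_orthogonality[OF n, of "int j - int i"] by simp
  qed
  also have "\<dots> = (if j \<in> J then of_nat n * b j else 0)"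
    by (simp add: mult.commute if_distrib sum.delta' finJ cong: if_cong)
  finally show ?thesis .
qed

lemma exists_dft_supported:
  assumes S: "S \<subseteq> {..<n}" and J: "J \<subseteq> {..<n}" and card: "n < card S + card J"
  obtains w where "\<And>u. u < n \<Longrightarrow> u \<notin> S \<Longrightarrow> w u = 0"
    and "\<And>j. j < n \<Longrightarrow> j \<notin> J \<Longrightarrow> dft n w j = 0" and "\<exists>j\<in>J. dft n w j \<noteq> 0"
proof -
  have finJ: "finite J" using J finite_subset by blast
  have "card ({..<n} - S) < card J"
    using card S card_mono[OF _ S] finite_subset[OF S] by (simp add: card_Diff_subset)
  then obtain b where b: "\<exists>j\<in>J. b j \<noteq> 0"
    "\<forall>u\<in>{..<n} - S. (\<Sum>j\<in>J. e2pi (- (real j * real u / real n)) * b j) = 0"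
    using homogeneous_system_nontrivial_solution[of "{..<n} - S" J
        "\<lambda>u j. e2pi (- (real j * real u / real n))"] finJ by blast
  define w where "w u = (\<Sum>i\<in>J. b i * e2pi (- (real i * real u / real n)))" for u
  have dft_w: "dft n w j = (if j \<in> J then of_nat n * b j else 0)" if "j < n" for j
    unfolding w_def using J that by (rule dft_inverse)
  show thesis
  proof
    show "w u = 0" if "u < n" "u \<notin> S" for u
      using b(2) that by (auto simp: w_def mult.commute)
    show "dft n w j = 0" if "j < n" "j \<notin> J" for j
      using dft_w that by simp
    obtain j where j: "j \<in> J" "b j \<noteq> 0" using b(1) by blast
    with J have "j < n" by auto
    with j dft_w[of j] show "\<exists>j\<in>J. dft n w j \<noteq> 0" by (intro bexI[of _ j]) auto
  qed
qed

lemma dft_quadratic_form: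
  "(\<Sum>j<n. \<mu> j * cnj (dft n w j) * dft n w j)
   = (\<Sum>u<n. \<Sum>v<n. cnj (w u) * w v * (\<Sum>j<n. \<mu> j * e2pi (real j * (real v - real u) / real n)))"
proof -
  have pointwise: "cnj (dft n w j) * dft n w j
      = (\<Sum>u<n. \<Sum>v<n. cnj (w u) * w v * e2pi (real j * (real v - real u) / real n))" for j
  proof -
    have e: "e2pi (real j * (real v - real u) / real n)
           = cnj (e2pi (real j * real u / real n)) * e2pi (real j * real v / real n)" for u v
      by (simp add: e2pi_minus[symmetric] e2pi_add[symmetric] algebra_simps diff_divide_distrib)
    show ?thesis
      unfolding dft_def cnj_sum sum_product e by (intro sum.cong refl) (simp only: complex_cnj_mult mult_ac)
  qed
  have "(\<Sum>j<n. \<mu> j * cnj (dft n w j) * dft n w j)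
      = (\<Sum>j<n. \<Sum>u<n. \<Sum>v<n. \<mu> j * (cnj (w u) * w v * e2pi (real j * (real v - real u) / real n)))"
    by (simp only: mult.assoc pointwise sum_distrib_left)
  also have "\<dots> = (\<Sum>u<n. \<Sum>v<n. \<Sum>j<n. \<mu> j * (cnj (w u) * w v * e2pi (real j * (real v - real u) / real n)))"
    by (subst sum.swap) (rule sum.cong[OF refl], rule sum.swap)
  also have "\<dots> = (\<Sum>u<n. \<Sum>v<n. cnj (w u) * w v * (\<Sum>j<n. \<mu> j * e2pi (real j * (real v - real u) / real n)))"
    by (simp only: sum_distrib_left mult.left_commute)
  finally show ?thesis .
qed

definition trig_poly :: "nat \<Rightarrow> nat set \<Rightarrow> (nat \<Rightarrow> complex) \<Rightarrow> nat \<Rightarrow> complex" where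
  "trig_poly n E c j = (\<Sum>k\<in>E. c k * e2pi (real j * real k / real n))"

text \<open>Each frequency \<open>\<plusminus>k + v - u\<close> is nonzero modulo \<open>n\<close> exactly because \<open>u\<close> and \<open>v\<close>
  are not adjacent, so orthogonality kills every term.\<close>
lemma sum_trig_poly_nonadjacent:
  assumes n: "n \<ge> 1" and nonadj: "\<not> circ_adj n E u v"
  shows "(\<Sum>j<n. (trig_poly n E c j + cnj (trig_poly n E c j))
                 * e2pi (real j * (real v - real u) / real n)) = 0"
proof -
  define freq where "freq j m = e2pi (real j * of_int m / real n)" for j m
  have plus: "e2pi (real j * real k / real n) * e2pi (real j * (real v - real u) / real n)
      = freq j (int k + int v - int u)" for j k
    unfolding freq_def e2pi_add[symmetric]
    by (rule arg_cong[where f = e2pi]) (use n in \<open>simp add: field_simps\<close>)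
  have minus: "cnj (e2pi (real j * real k / real n)) * e2pi (real j * (real v - real u) / real n)
      = freq j (int v - int u - int k)" for j k
    unfolding freq_def e2pi_minus[symmetric] e2pi_add[symmetric]
    by (rule arg_cong[where f = e2pi]) (use n in \<open>simp add: field_simps\<close>)
  have "(\<Sum>j<n. (trig_poly n E c j + cnj (trig_poly n E c j))
                 * e2pi (real j * (real v - real u) / real n))
      = (\<Sum>k\<in>E. c k * (\<Sum>j<n. freq j (int k + int v - int u))
               + cnj (c k) * (\<Sum>j<n. freq j (int v - int u - int k)))"
    unfolding trig_poly_def cnj_sum complex_cnj_mult distrib_right sum_distrib_right
      sum.distrib sum_distrib_left
    by (subst (1 2) sum.swap) (simp only: mult.assoc plus minus)
  also have "\<dots> = 0"
  proof (intro sum.neutral ballI)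
    fix k assume "k \<in> E"
    then have "\<not> int n dvd (int k + int v - int u)" "\<not> int n dvd (int v - int u - int k)"
      using nonadj unfolding circ_adj_def
      by (metis mod_eq_dvd_iff minus_diff_eq diff_diff_eq2 add.commute diff_add_eq dvd_minus_iff)+
    then show "c k * (\<Sum>j<n. freq j (int k + int v - int u))
             + cnj (c k) * (\<Sum>j<n. freq j (int v - int u - int k)) = 0"
      unfolding freq_def sum_e2pi_orthogonality[OF n] by simp
  qed
  finally show ?thesis .
qed

lemma energy_dft_circ_indep_eq_0:
  assumes n: "n \<ge> 1" and S: "circ_indep n E S" and w: "\<And>u. u < n \<Longrightarrow> u \<notin> S \<Longrightarrow> w u = 0"
  shows "(\<Sum>j<n. 2 * Re (trig_poly n E c j) * (cmod (dft n w j))\<^sup>2) = 0"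
proof -
  define P where "P = trig_poly n E c"
  have norm_sq: "cnj z * z = complex_of_real ((cmod z)\<^sup>2)" for z
    by (metis complex_norm_square mult.commute)
  have "complex_of_real (\<Sum>j<n. 2 * Re (P j) * (cmod (dft n w j))\<^sup>2)
      = (\<Sum>j<n. (P j + cnj (P j)) * cnj (dft n w j) * dft n w j)"
    unfolding of_real_sum by (intro sum.cong refl) (simp add: complex_add_cnj norm_sq mult.assoc)
  also have "\<dots> = 0"
    unfolding dft_quadratic_form
  proof (intro sum.neutral ballI)
    fix u v assume "u \<in> {..<n}" "v \<in> {..<n}"
    then show "cnj (w u) * w v * (\<Sum>j<n. (P j + cnj (P j)) * e2pi (real j * (real v - real u) / real n)) = 0"
      using w[of u] w[of v] S sum_trig_poly_nonadjacent[OF n, of E u v c]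
      by (cases "u \<in> S"; cases "v \<in> S") (auto simp: P_def circ_indep_def)
  qed
  finally have "complex_of_real (\<Sum>j<n. 2 * Re (P j) * (cmod (dft n w j))\<^sup>2) = 0" .
  then show ?thesis unfolding P_def of_real_eq_0_iff .
qed

lemma circ_indep_card_add_positive_le:
  assumes n: "n \<ge> 1" and S: "circ_indep n E S"
  shows "card S + card {j\<in>{..<n}. Re (trig_poly n E c j) > 0} \<le> n"
proof (rule ccontr)
  define P where "P = trig_poly n E c"
  define J where "J = {j\<in>{..<n}. Re (P j) > 0}"
  assume "\<not> ?thesis"
  then have card: "n < card S + card J" by (simp add: J_def P_def)
  have J_sub: "J \<subseteq> {..<n}" by (auto simp: J_def)
  have S_sub: "S \<subseteq> {..<n}" using S by (simp add: circ_indep_def)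
  obtain w where w_S: "\<And>u. u < n \<Longrightarrow> u \<notin> S \<Longrightarrow> w u = 0"
    and W_J: "\<And>j. j < n \<Longrightarrow> j \<notin> J \<Longrightarrow> dft n w j = 0" and W_nz: "\<exists>j\<in>J. dft n w j \<noteq> 0"
    using exists_dft_supported[OF S_sub J_sub card] by blast
  obtain j0 where j0: "j0 \<in> J" "dft n w j0 \<noteq> 0" using W_nz by blast
  have "0 < 2 * Re (P j0) * (cmod (dft n w j0))\<^sup>2" using j0 by (simp add: J_def)
  also have "\<dots> \<le> (\<Sum>j<n. 2 * Re (P j) * (cmod (dft n w j))\<^sup>2)"
  proof (rule member_le_sum)
    show "j0 \<in> {..<n}" using j0 by (simp add: J_def)
    show "0 \<le> 2 * Re (P j) * (cmod (dft n w j))\<^sup>2" if "j \<in> {..<n} - {j0}" for j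
      using that W_J[of j] by (cases "j \<in> J") (auto simp: J_def)
  qed simp
  also have "\<dots> = 0"
    unfolding P_def by (rule energy_dft_circ_indep_eq_0[OF n S w_S])
  finally show False by simp
qed

section \<open>Existence of the independence ratio of a circulant graph\<close>

lemma finite_card_circ_indep: "finite {card S | S. circ_indep n E S}"
proof -
  have "{card S | S. circ_indep n E S} \<subseteq> card ` Pow {..<n}"
    by (auto simp: circ_indep_def)
  then show ?thesis by (rule finite_subset) auto
qed

lemma card_le_circ_alpha: "circ_indep n E S \<Longrightarrow> card S \<le> circ_alpha n E"
  unfolding circ_alpha_def by (rule Max_ge[OF finite_card_circ_indep]) auto

lemma circ_alpha_attained:
  obtains S where "circ_indep n E S" "card S = circ_alpha n E"
proof -
  have "circ_indep n E {}" by (simp add: circ_indep_def)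
  then have "circ_alpha n E \<in> {card S | S. circ_indep n E S}"
    unfolding circ_alpha_def using finite_card_circ_indep by (intro Max_in) auto
  then show ?thesis using that by auto
qed

definition diff_free :: "nat set \<Rightarrow> nat set \<Rightarrow> bool" where
  "diff_free E A \<longleftrightarrow> (\<forall>u\<in>A. \<forall>v\<in>A. \<forall>d\<in>E. u \<noteq> v + d)"

definition max_diff_free :: "nat set \<Rightarrow> nat \<Rightarrow> nat" where
  "max_diff_free E L = Max {card A | A. A \<subseteq> {..<L} \<and> diff_free E A}"

lemma finite_card_diff_free: "finite {card A | A. A \<subseteq> {..<L} \<and> diff_free E A}"
proof -
  have "{card A | A. A \<subseteq> {..<L} \<and> diff_free E A} \<subseteq> card ` Pow {..<L}" by auto
  then show ?thesis by (rule finite_subset) auto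
qed

lemma card_le_max_diff_free: "A \<subseteq> {..<L} \<Longrightarrow> diff_free E A \<Longrightarrow> card A \<le> max_diff_free E L"
  unfolding max_diff_free_def by (rule Max_ge[OF finite_card_diff_free]) auto

lemma max_diff_free_attained:
  obtains A where "A \<subseteq> {..<L}" "diff_free E A" "card A = max_diff_free E L"
proof -
  have "max_diff_free E L \<in> {card A | A. A \<subseteq> {..<L} \<and> diff_free E A}"
    unfolding max_diff_free_def using finite_card_diff_free
    by (intro Max_in) (auto intro!: exI[of _ "{}"] simp: diff_free_def)
  then show ?thesis using that by auto
qed

lemma max_diff_free_le: "max_diff_free E L \<le> L"
proof -
  obtain A where "A \<subseteq> {..<L}" "card A = max_diff_free E L" using max_diff_free_attained by metis
  then show ?thesis using card_mono[of "{..<L}" A] by simp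
qed

lemma max_diff_free_mono: "L \<le> L' \<Longrightarrow> max_diff_free E L \<le> max_diff_free E L'"
proof -
  assume "L \<le> L'"
  obtain A where A: "A \<subseteq> {..<L}" "diff_free E A" "card A = max_diff_free E L"
    using max_diff_free_attained by metis
  moreover from A(1) \<open>L \<le> L'\<close> have "A \<subseteq> {..<L'}" by auto
  ultimately show ?thesis using card_le_max_diff_free[of A L' E] by simp
qed

lemma max_diff_free_add_le: "max_diff_free E (a + b) \<le> max_diff_free E a + max_diff_free E b"
proof -
  obtain A where A: "A \<subseteq> {..<a+b}" "diff_free E A" "card A = max_diff_free E (a+b)"
    using max_diff_free_attained by metis
  define A\<^sub>1 where "A\<^sub>1 = A \<inter> {..<a}"
  define A\<^sub>2 where "A\<^sub>2 = A \<inter> {a..}"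
  have "finite A" using A(1) finite_subset by blast
  moreover have "A = A\<^sub>1 \<union> A\<^sub>2" "A\<^sub>1 \<inter> A\<^sub>2 = {}" by (auto simp: A\<^sub>1_def A\<^sub>2_def)
  ultimately have "card A = card A\<^sub>1 + card A\<^sub>2"
    by (metis card_Un_disjoint finite_Un)
  moreover have "card A\<^sub>1 \<le> max_diff_free E a"
    using A by (intro card_le_max_diff_free) (auto simp: A\<^sub>1_def diff_free_def)
  moreover have "card A\<^sub>2 = card ((\<lambda>x. x - a) ` A\<^sub>2)"
    by (rule card_image[symmetric]) (auto simp: inj_on_def A\<^sub>2_def)
  moreover have "card ((\<lambda>x. x - a) ` A\<^sub>2) \<le> max_diff_free E b"
  proof (rule card_le_max_diff_free)
    show "(\<lambda>x. x - a) ` A\<^sub>2 \<subseteq> {..<b}" using A(1) by (auto simp: A\<^sub>2_def)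
    show "diff_free E ((\<lambda>x. x - a) ` A\<^sub>2)"
      unfolding diff_free_def
    proof (intro ballI notI)
      fix x y d assume "x \<in> (\<lambda>x. x - a) ` A\<^sub>2" "y \<in> (\<lambda>x. x - a) ` A\<^sub>2" "d \<in> E" "x = y + d"
      then obtain u v where "u \<in> A" "v \<in> A" "a \<le> u" "a \<le> v" "u - a = v - a + d"
        by (auto simp: A\<^sub>2_def)
      then have "u = v + d" by linarith
      with A(2) \<open>u \<in> A\<close> \<open>v \<in> A\<close> \<open>d \<in> E\<close> show False by (auto simp: diff_free_def)
    qed
  qed
  ultimately show ?thesis using A by linarith
qed

lemma max_diff_free_mult_le: "max_diff_free E (k * L) \<le> k * max_diff_free E L"
proof (induction k)
  case 0
  then show ?case using max_diff_free_le[of E 0] by simp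
next
  case (Suc k)
  have "max_diff_free E (L + k * L) \<le> max_diff_free E L + max_diff_free E (k * L)"
    by (rule max_diff_free_add_le)
  with Suc show ?case by simp
qed

lemma circ_alpha_le_max_diff_free: "circ_alpha n E \<le> max_diff_free E n"
proof -
  obtain S where S: "circ_indep n E S" "card S = circ_alpha n E" by (rule circ_alpha_attained)
  have "diff_free E S"
    unfolding diff_free_def
  proof (intro ballI notI)
    fix u v d assume "u \<in> S" "v \<in> S" "d \<in> E" "u = v + d"
    then have "circ_adj n E u v" unfolding circ_adj_def by (intro bexI[of _ d]) auto
    with S \<open>u \<in> S\<close> \<open>v \<in> S\<close> show False by (auto simp: circ_indep_def)
  qed
  with S show ?thesis using card_le_max_diff_free[of S n E] by (auto simp: circ_indep_def)
qed

lemma mod_diff_eq_cases: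
  fixes u v d n :: nat
  assumes "u < n" "v < n" "d < n" and eq: "(int u - int v) mod int n = int d mod int n"
  shows "u = v + d \<or> u + n = v + d"
proof -
  have d: "int d mod int n = int d" using assms(3) by (intro mod_pos_pos_trivial) auto
  show ?thesis
  proof (cases "v \<le> u")
    case True
    then have "(int u - int v) mod int n = int u - int v"
      using assms(1) by (intro mod_pos_pos_trivial) auto
    with eq d have "int u - int v = int d" by linarith
    then show ?thesis by linarith
  next
    case False
    have "(int u - int v) mod int n = (int u - int v + int n) mod int n" by simp
    also have "\<dots> = int u - int v + int n" using assms(2) False by (intro mod_pos_pos_trivial) auto
    finally have "int u - int v + int n = int d" using eq d by linarith
    then show ?thesis by linarith
  qed
qed

lemma mult_add_eq_mult_add_iff:
  fixes a b P :: nat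
  assumes "a < P" "b < P"
  shows "i * P + a = j * P + b \<longleftrightarrow> i = j \<and> a = b"
  using assms by (metis add.commute add_diff_cancel_left' bot_nat_0.extremum_strict
      mod_less mod_mult_self3 mult_cancel2)

text \<open>A distance \<open>d \<le> N\<close> never leads from one copy of \<open>A \<subseteq> [0, L)\<close> into the next one
  \<open>L + N\<close> further on, nor across the wrap-around at \<open>n\<close>.\<close>
lemma circ_indep_periodic:
  assumes E: "E \<subseteq> {1..N}" and A: "A \<subseteq> {..<L}" "diff_free E A" and q: "q * (L + N) \<le> n"
  shows "circ_indep n E ((\<lambda>(i, a). i * (L + N) + a) ` ({..<q} \<times> A))" (is "circ_indep n E ?S")
proof -
  define P where "P = L + N"
  have aP: "a + d < P" if "a \<in> A" "d \<le> N" for a d using A(1) that by (auto simp: P_def)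
  have block_le: "i * P + P \<le> n" if "i < q" for i
    using that q by (metis P_def Suc_leI add.commute mult_Suc mult_le_mono1 order_trans)
  have no_diff: "u \<noteq> v + d \<and> v + d < n" if uS: "u \<in> ?S" and vS: "v \<in> ?S" and dE: "d \<in> E" for u v d
  proof -
    obtain i a where ia: "i < q" "a \<in> A" "u = i * P + a"
      using uS by (auto simp: P_def)
    obtain i' a' where ia': "i' < q" "a' \<in> A" "v = i' * P + a'"
      using vS by (auto simp: P_def)
    have "a' + d < P" using aP[OF ia'(2)] E dE by auto
    have "u \<noteq> v + d"
    proof
      assume "u = v + d"
      then have "i * P + a = i' * P + (a' + d)" using ia ia' by simp
      then have "a = a' + d"
        using mult_add_eq_mult_add_iff aP[OF ia(2), of 0] \<open>a' + d < P\<close> by simp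
      with A(2) ia(2) ia'(2) dE show False by (auto simp: diff_free_def)
    qed
    moreover have "v + d < n" using \<open>a' + d < P\<close> block_le[OF ia'(1)] ia'(3) by linarith
    ultimately show ?thesis by blast
  qed
  have S_sub: "?S \<subseteq> {..<n}"
  proof
    fix u assume "u \<in> ?S"
    then obtain i a where "i < q" "a \<in> A" "u = i * P + a" by (auto simp: P_def)
    then show "u \<in> {..<n}" using block_le[of i] aP[of a 0] by simp
  qed
  show ?thesis
    unfolding circ_indep_def circ_adj_def
  proof (intro conjI S_sub ballI notI)
    fix u v assume uv: "u \<in> ?S" "v \<in> ?S"
    assume "\<exists>d\<in>E. (int u - int v) mod int n = int d mod int n
                 \<or> (int v - int u) mod int n = int d mod int n"
    then obtain d where "d \<in> E" and "(int u - int v) mod int n = int d mod int n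
                 \<or> (int v - int u) mod int n = int d mod int n" by blast
    moreover have "u < n" "v < n" using uv S_sub by auto
    ultimately show False
      using no_diff[OF uv] no_diff[OF uv(2,1)] mod_diff_eq_cases[of u n v d] mod_diff_eq_cases[of v n u d]
      by fastforce
  qed
qed

lemma periodic_le_circ_alpha:
  assumes E: "E \<subseteq> {1..N}"
  shows "n div (L + N) * max_diff_free E L \<le> circ_alpha n E"
proof -
  define q where "q = n div (L + N)"
  obtain A where A: "A \<subseteq> {..<L}" "diff_free E A" "card A = max_diff_free E L"
    using max_diff_free_attained by metis
  have "inj_on (\<lambda>(i, a). i * (L + N) + a) ({..<q} \<times> A)"
  proof (rule inj_onI, clarify)
    fix i a i' a' assume "a \<in> A" "a' \<in> A" "i * (L + N) + a = i' * (L + N) + a'"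
    moreover from this(1,2) have "a < L + N" "a' < L + N" using A(1) by auto
    ultimately show "i = i' \<and> a = a'" using mult_add_eq_mult_add_iff by blast
  qed
  then have "card ((\<lambda>(i, a). i * (L + N) + a) ` ({..<q} \<times> A)) = q * max_diff_free E L"
    using A finite_subset[OF A(1)] by (simp add: card_image card_cartesian_product)
  moreover have "q * (L + N) \<le> n" by (simp add: q_def)
  ultimately show ?thesis
    using card_le_circ_alpha[OF circ_indep_periodic[OF E A(1,2)]] by (metis q_def)
qed

lemma circ_alpha_div_le:
  assumes L: "L \<ge> 1" and n: "n \<ge> 1"
  shows "real (circ_alpha n E) / real n \<le> real (max_diff_free E L) / real L + real L / real n"
proof -
  have "n \<le> (n div L + 1) * L"
    using L by (metis div_less_iff_less_mult gr0I less_add_one less_imp_le_nat not_one_le_zero)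
  then have "circ_alpha n E \<le> (n div L + 1) * max_diff_free E L"
    using circ_alpha_le_max_diff_free max_diff_free_mono max_diff_free_mult_le order_trans by metis
  then have "real (circ_alpha n E) \<le> (real (n div L) + 1) * real (max_diff_free E L)"
    by (metis of_nat_1 of_nat_add of_nat_le_iff of_nat_mult)
  also have "\<dots> \<le> (real n / real L + 1) * real (max_diff_free E L)"
    by (intro mult_right_mono) (auto simp: of_nat_div_le_of_nat)
  also have "\<dots> \<le> real n * (real (max_diff_free E L) / real L) + real L"
    using max_diff_free_le[of E L] by (simp add: algebra_simps)
  finally show ?thesis using n by (simp add: divide_simps mult.commute)
qed

lemma circ_alpha_div_ge:
  assumes E: "E \<subseteq> {1..N}" and n: "n \<ge> 1"
  shows "real (max_diff_free E L) / real (L + N) - real L / real n \<le> real (circ_alpha n E) / real n"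
proof -
  have "(real n / real (L + N) - 1) * real (max_diff_free E L)
      \<le> real (n div (L + N)) * real (max_diff_free E L)"
    by (intro mult_right_mono) (use divide_nat_diff_div_nat_less_one[of n "L + N"] in auto)
  also have "\<dots> \<le> real (circ_alpha n E)"
    using periodic_le_circ_alpha[OF E, of n L] by (metis of_nat_le_iff of_nat_mult)
  finally have "real n * (real (max_diff_free E L) / real (L + N)) - real L \<le> real (circ_alpha n E)"
    using max_diff_free_le[of E L] by (simp add: algebra_simps)
  then show ?thesis using n by (simp add: divide_simps mult.commute)
qed

lemma eventually_circ_alpha_ratio_less:
  assumes L: "L \<ge> 1" and a: "real (max_diff_free E L) / real L < a"
  shows "\<forall>\<^sub>F n in sequentially. real (circ_alpha n E) / real n < a"
proof -
  have "(\<lambda>n. real (max_diff_free E L) / real L + real L / real n)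
        \<longlonglongrightarrow> real (max_diff_free E L) / real L"
    by real_asymp
  from this a
  have "\<forall>\<^sub>F n in sequentially. real (max_diff_free E L) / real L + real L / real n < a"
    by (rule order_tendstoD(2))
  with eventually_ge_at_top[of 1] show ?thesis
    by eventually_elim (meson circ_alpha_div_le[OF L] le_less_trans)
qed

lemma eventually_circ_alpha_ratio_greater:
  assumes E: "E \<subseteq> {1..N}" and a: "a < real (max_diff_free E L) / real (L + N)"
  shows "\<forall>\<^sub>F n in sequentially. a < real (circ_alpha n E) / real n"
proof -
  have "(\<lambda>n. real (max_diff_free E L) / real (L + N) - real L / real n)
        \<longlonglongrightarrow> real (max_diff_free E L) / real (L + N)"
    by real_asymp
  from this a
  have "\<forall>\<^sub>F n in sequentially. a < real (max_diff_free E L) / real (L + N) - real L / real n"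
    by (rule order_tendstoD(1))
  with eventually_ge_at_top[of 1] show ?thesis
    by eventually_elim (meson circ_alpha_div_ge[OF E] less_le_trans)
qed

lemma circ_alpha_ratio_tendsto:
  assumes E: "E \<subseteq> {1..N}"
  shows "(\<lambda>n. real (circ_alpha n E) / real n)
         \<longlonglongrightarrow> (INF L\<in>{1..}. real (max_diff_free E L) / real L)"
proof -
  define b where "b = (INF L\<in>{1..}. real (max_diff_free E L) / real L)"
  have bdd: "bdd_below ((\<lambda>L. real (max_diff_free E L) / real L) ` {1..})"
    by (intro bdd_belowI[of _ 0]) auto
  show ?thesis
    unfolding b_def[symmetric]
  proof (rule order_tendstoI)
    fix a
    assume "b < a"
    then obtain L where "L \<ge> 1" "real (max_diff_free E L) / real L < a"
      using cINF_less_iff[OF _ bdd] by (auto simp: b_def)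
    then show "\<forall>\<^sub>F n in sequentially. real (circ_alpha n E) / real n < a"
      by (rule eventually_circ_alpha_ratio_less)
  next
    fix a
    assume "a < b"
    have "(\<lambda>L. b * real L / real (L + N)) \<longlonglongrightarrow> b" by real_asymp
    from order_tendstoD(1)[OF this \<open>a < b\<close>]
    obtain M where "\<forall>L\<ge>M. a < b * real L / real (L + N)"
      unfolding eventually_sequentially by blast
    then obtain L where L: "L \<ge> 1" "a < b * real L / real (L + N)"
      by (meson le_add1 le_add2)
    moreover have "b * real L \<le> real (max_diff_free E L)"
      using cINF_lower[OF bdd, of L] L(1) by (simp add: b_def field_simps)
    ultimately have "a < real (max_diff_free E L) / real (L + N)"
      by (smt (verit) divide_right_mono of_nat_0_le_iff)
    with E show "\<forall>\<^sub>F n in sequentially. a < real (circ_alpha n E) / real n"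
      by (rule eventually_circ_alpha_ratio_greater)
  qed
qed

lemma alpha_fin_limit:
  assumes "E \<subseteq> {1..N}"
  shows "(\<lambda>n. real (circ_alpha n E) / real n) \<longlonglongrightarrow> alpha_fin E"
  using circ_alpha_ratio_tendsto[OF assms] unfolding alpha_fin_def by (metis limI)

lemma alpha_fin_nonneg: "E \<subseteq> {1..N} \<Longrightarrow> alpha_fin E \<ge> 0"
  using alpha_fin_limit by (rule LIMSEQ_le_const) auto

lemma alpha_fin_le:
  assumes "E \<subseteq> {1..N}" and "\<And>n. n \<ge> 1 \<Longrightarrow> real (circ_alpha n E) / real n \<le> c"
  shows "alpha_fin E \<le> c"
  using alpha_fin_limit[OF assms(1)] by (rule LIMSEQ_le_const2) (use assms(2) in auto)

section \<open>Averaging over translates of a grid\<close>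

lemma measure_shifted_slice:
  fixes G :: "real set"
  shows "measure lebesgue {t\<in>{0..<\<delta>}. t + c \<in> G} = measure lebesgue ({c..<c + \<delta>} \<inter> G)"
proof -
  have "(+) c ` {t\<in>{0..<\<delta>}. t + c \<in> G} = {c..<c + \<delta>} \<inter> G"
  proof (intro set_eqI iffI)
    fix x assume "x \<in> {c..<c + \<delta>} \<inter> G"
    then show "x \<in> (+) c ` {t\<in>{0..<\<delta>}. t + c \<in> G}"
      by (intro image_eqI[of _ _ "x - c"]) auto
  qed (auto simp: add.commute)
  then show ?thesis using measure_translation[of c] by metis
qed

lemma disjoint_family_on_grid_cells:
  assumes "c > 0"
  shows "disjoint_family_on (\<lambda>j::nat. {real j / c..<real j / c + 1 / c}) I"
  unfolding disjoint_family_on_def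
proof (intro ballI impI)
  have "{real i / c..<real i / c + 1 / c} \<inter> {real j / c..<real j / c + 1 / c} = {}" if "i < j" for i j
  proof -
    have "real i / c + 1 / c = (real i + 1) / c" by (simp add: add_divide_distrib)
    also have "\<dots> \<le> real j / c" using that assms by (intro divide_right_mono) auto
    finally show ?thesis by auto
  qed
  then show "{real i / c..<real i / c + 1 / c} \<inter> {real j / c..<real j / c + 1 / c} = {}"
    if "i \<noteq> j" for i j
    using that by (metis Int_commute linorder_neqE_nat)
qed

lemma sum_measure_grid_translates_le:
  fixes G :: "real set"
  assumes G: "closed G" and n: "n \<ge> 1"
  shows "(\<Sum>j<n. measure lebesgue {t\<in>{0..<1 / real n}. t + real j / real n \<in> G})
         \<le> measure lebesgue ({0..1} \<inter> G)"
proof -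
  have npos: "real n > 0" using n by simp
  define B where "B j = {real j / real n..<real j / real n + 1 / real n} \<inter> G" for j
  have B_sets: "B j \<in> sets lebesgue" for j using G by (auto simp: B_def)
  have "(\<Sum>j<n. measure lebesgue {t\<in>{0..<1 / real n}. t + real j / real n \<in> G})
      = (\<Sum>j<n. measure lebesgue (B j))"
    unfolding B_def measure_shifted_slice ..
  also have "\<dots> = measure lebesgue (\<Union>j<n. B j)"
  proof (rule measure_finite_Union[symmetric])
    show "disjoint_family_on B {..<n}"
      using disjoint_family_on_grid_cells[OF npos]
      by (rule disjoint_family_on_bisimulation) (auto simp: B_def)
    show "emeasure lebesgue (B j) \<noteq> \<infinity>" for j
    proof -
      have "emeasure lebesgue (B j) \<le> emeasure lebesgue {real j / real n..<real j / real n + 1 / real n}"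
        by (rule emeasure_mono) (auto simp: B_def)
      also have "\<dots> < \<infinity>" by simp
      finally show ?thesis by simp
    qed
  qed (use B_sets in auto)
  also have "\<dots> \<le> measure lebesgue ({0..1} \<inter> G)"
  proof (rule measure_mono_fmeasurable)
    show "(\<Union>j<n. B j) \<subseteq> {0..1} \<inter> G"
    proof
      fix x assume "x \<in> (\<Union>j<n. B j)"
      then obtain j where j: "j < n" "x \<in> B j" by auto
      have "real j / real n + 1 / real n \<le> 1" "0 \<le> real j / real n" using j npos by (simp_all add: field_simps)
      moreover have "real j / real n \<le> x" "x < real j / real n + 1 / real n" "x \<in> G"
        using j(2) by (auto simp: B_def)
      ultimately have "0 \<le> x" "x \<le> 1" "x \<in> G" by linarith+
      then show "x \<in> {0..1} \<inter> G" by simp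
    qed
    show "{0..1} \<inter> G \<in> fmeasurable lebesgue"
      using G by (intro lmeasurable_compact) (simp add: compact_Int_closed)
  qed (use B_sets in auto)
  finally show ?thesis .
qed

text \<open>Integrate the number of hits over the shifts \<open>t \<in> [0, 1/n)\<close>.\<close>
lemma card_grid_hits_le_measure:
  fixes G :: "real set"
  assumes G: "closed G" and n: "n \<ge> 1"
    and hits: "\<And>t. m \<le> card {j\<in>{..<n}. t + real j / real n \<in> G}"
  shows "real m / real n \<le> measure lebesgue ({0..1} \<inter> G)"
proof -
  have npos: "real n > 0" using n by simp
  define I where "I = {0..<1 / real n}"
  define A where "A j = {t\<in>I. t + real j / real n \<in> G}" for j
  have A_sets: "A j \<in> sets lebesgue" for j
  proof -
    have "closed ((\<lambda>t. t + real j / real n) -` G)"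
      using G by (intro continuous_closed_vimage continuous_intros)
    then show ?thesis by (auto simp: A_def I_def Collect_conj_eq vimage_def)
  qed
  have A_fin: "emeasure lebesgue (A j) < \<infinity>" for j
  proof -
    have "emeasure lebesgue (A j) \<le> emeasure lebesgue I"
      by (rule emeasure_mono) (auto simp: A_def I_def)
    also have "\<dots> < \<infinity>" using npos by (simp add: I_def)
    finally show ?thesis .
  qed
  have pointwise: "real m * indicator I t \<le> (\<Sum>j<n. indicator (A j) t :: real)" for t
  proof (cases "t \<in> I")
    case True
    then have "(\<Sum>j<n. indicator (A j) t :: real) = real (card {j\<in>{..<n}. t + real j / real n \<in> G})"
      by (simp add: A_def indicator_def sum.If_cases Int_def)
    then show ?thesis using True hits[of t] by simp
  qed (simp add: sum_nonneg)
  have "real m * measure lebesgue I = integral\<^sup>L lebesgue (\<lambda>t. real m * indicator I t)"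
    by simp
  also have "\<dots> \<le> integral\<^sup>L lebesgue (\<lambda>t. \<Sum>j<n. indicator (A j) t)"
    using npos A_sets A_fin pointwise
    by (intro integral_mono integrable_mult_right integrable_real_indicator integrable_sum)
       (auto simp: I_def)
  also have "\<dots> = (\<Sum>j<n. measure lebesgue (A j))"
    using A_sets A_fin by (subst Bochner_Integration.integral_sum) auto
  also have "\<dots> \<le> measure lebesgue ({0..1} \<inter> G)"
    unfolding A_def I_def by (rule sum_measure_grid_translates_le[OF G n])
  finally show ?thesis using npos by (simp add: I_def field_simps)
qed

lemma circ_alpha_le_card_grid_nonpos:
  assumes n: "n \<ge> 1"
  shows "circ_alpha n E
    \<le> card {j\<in>{..<n}. Re (\<Sum>k\<in>E. a k * e2pi (real k * (t + real j / real n))) \<le> 0}"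
    (is "_ \<le> card ?H")
proof -
  obtain S where S: "circ_indep n E S" "card S = circ_alpha n E" by (rule circ_alpha_attained)
  define c where "c k = a k * e2pi (real k * t)" for k
  have "trig_poly n E c j = (\<Sum>k\<in>E. a k * e2pi (real k * (t + real j / real n)))" for j
    unfolding trig_poly_def c_def
    by (intro sum.cong refl) (simp add: mult.assoc e2pi_add[symmetric] algebra_simps)
  then have "{j\<in>{..<n}. Re (trig_poly n E c j) > 0} = {..<n} - ?H" by auto
  moreover have H_sub: "?H \<subseteq> {..<n}" by auto
  ultimately have "card S + (n - card ?H) \<le> n"
    using circ_indep_card_add_positive_le[OF n S(1), of c] finite_subset[OF H_sub]
    by (simp add: card_Diff_subset)
  moreover have "card ?H \<le> n" using card_mono[OF _ H_sub] by simp
  ultimately show ?thesis using S(2) by linarith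
qed

lemma alpha_fin_le_measure_poly_nonpos:
  fixes a :: "nat \<Rightarrow> complex"
  shows "alpha_fin ({k. k \<ge> 1 \<and> a k \<noteq> 0} \<inter> {1..N})
    \<le> measure lebesgue ({0..1} \<inter> {s. Re (\<Sum>k=1..N. a k * cis (2 * pi * s) ^ k) \<le> 0})"
proof -
  define E where "E = {k. k \<ge> 1 \<and> a k \<noteq> 0} \<inter> {1..N}"
  define G where "G = {s. Re (\<Sum>k=1..N. a k * cis (2 * pi * s) ^ k) \<le> 0}"
  have "closed G" unfolding G_def by (intro closed_Collect_le continuous_intros)
  have "(\<Sum>k=1..N. a k * cis (2 * pi * s) ^ k) = (\<Sum>k\<in>E. a k * e2pi (real k * s))" for s
  proof -
    have "(\<Sum>k=1..N. a k * cis (2 * pi * s) ^ k) = (\<Sum>k=1..N. a k * e2pi (real k * s))"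
      by (simp only: e2pi_def[symmetric] e2pi_power)
    also have "\<dots> = (\<Sum>k\<in>E. a k * e2pi (real k * s))"
      by (rule sum.mono_neutral_right) (auto simp: E_def)
    finally show ?thesis .
  qed
  then have G_eq: "G = {s. Re (\<Sum>k\<in>E. a k * e2pi (real k * s)) \<le> 0}" by (simp add: G_def)
  show ?thesis
    unfolding E_def[symmetric] G_def[symmetric]
  proof (rule alpha_fin_le)
    show "E \<subseteq> {1..N}" by (auto simp: E_def)
    show "real (circ_alpha n E) / real n \<le> measure lebesgue ({0..1} \<inter> G)" if n: "n \<ge> 1" for n
      using card_grid_hits_le_measure[OF \<open>closed G\<close> n] circ_alpha_le_card_grid_nonpos[OF n]
      unfolding G_eq by simp
  qed
qed

section \<open>Passage to the limit\<close>

lemma fmeasurable_sublevel: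
  fixes h :: "'a::euclidean_space \<Rightarrow> real"
  assumes "compact K" and "continuous_on UNIV h"
  shows "{s\<in>K. h s \<le> \<epsilon>} \<in> fmeasurable lebesgue"
proof -
  have "closed {s. h s \<le> \<epsilon>}" by (intro closed_Collect_le assms(2) continuous_on_const)
  with assms(1) have "compact (K \<inter> {s. h s \<le> \<epsilon>})" by (rule compact_Int_closed)
  then show ?thesis by (simp add: Collect_conj_eq lmeasurable_compact)
qed

lemma tendsto_measure_sublevel:
  fixes h :: "'a::euclidean_space \<Rightarrow> real"
  assumes K: "compact K" and h: "continuous_on UNIV h"
  shows "(\<lambda>m. measure lebesgue {s\<in>K. h s \<le> 1 / Suc m}) \<longlonglongrightarrow> measure lebesgue {s\<in>K. h s \<le> 0}"
proof -
  define H where "H \<epsilon> = {s\<in>K. h s \<le> \<epsilon>}" for \<epsilon>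
  have H_fmeasurable: "H \<epsilon> \<in> fmeasurable lebesgue" for \<epsilon>
    unfolding H_def by (rule fmeasurable_sublevel[OF K h])
  have "(\<lambda>m. measure lebesgue (H (1 / Suc m))) \<longlonglongrightarrow> measure lebesgue (\<Inter>m. H (1 / Suc m))"
  proof (rule Lim_measure_decseq)
    show "range (\<lambda>m. H (1 / Suc m)) \<subseteq> sets lebesgue" using H_fmeasurable by auto
    show "decseq (\<lambda>m. H (1 / Suc m))"
    proof (rule decseq_SucI)
      fix m
      have "1 / real (Suc (Suc m)) \<le> 1 / real (Suc m)" by (simp add: frac_le)
      then show "H (1 / Suc (Suc m)) \<subseteq> H (1 / Suc m)" by (auto simp: H_def)
    qed
    show "emeasure lebesgue (H (1 / Suc m)) \<noteq> \<infinity>" for m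
      using fmeasurableD2[OF H_fmeasurable] by simp
  qed
  moreover have "(\<Inter>m. H (1 / Suc m)) = H 0"
  proof (intro set_eqI iffI)
    fix s assume s: "s \<in> (\<Inter>m. H (1 / Suc m))"
    have "h s \<le> 0"
    proof (rule ccontr)
      assume "\<not> h s \<le> 0"
      then obtain m where "inverse (real (Suc m)) < h s" using reals_Archimedean by (metis not_le)
      moreover have "h s \<le> 1 / Suc m" using s by (auto simp: H_def)
      ultimately show False by (simp add: inverse_eq_divide)
    qed
    with s show "s \<in> H 0" by (auto simp: H_def)
  qed (auto simp: H_def elim: order_trans)
  ultimately show ?thesis by (simp add: H_def)
qed

lemma continuous_on_compose_circle:
  assumes "continuous_on (sphere 0 1) g"
  shows "continuous_on UNIV (\<lambda>s. g (cis (2 * pi * s)))"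
proof (rule continuous_on_compose2[OF assms])
  show "continuous_on UNIV (\<lambda>s. cis (2 * pi * s))"
    by (auto intro!: continuous_intros simp: cis_conv_exp)
qed auto

lemma circ_measure_sphere:
  "circ_measure {z \<in> sphere 0 1. P z} = measure lebesgue {t\<in>{0..1}. P (cis (2 * pi * t))}"
  by (simp add: circ_measure_def)

lemma circ_measure_nonpos_le:
  fixes g :: "complex \<Rightarrow> real"
  assumes "continuous_on (sphere 0 1) g"
  shows "circ_measure {z \<in> sphere 0 1. g z \<le> 0}
    \<le> circ_measure {z \<in> sphere 0 1. g z < 0} + circ_measure {z \<in> sphere 0 1. g z = 0}"
proof -
  define h where "h s = g (cis (2 * pi * s))" for s
  have h: "continuous_on UNIV h"
    unfolding h_def by (rule continuous_on_compose_circle[OF assms])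
  have "{s\<in>{0..1}. h s < 0} \<in> sets lebesgue"
    using open_Collect_less[OF h continuous_on_const] by (auto simp: Collect_conj_eq)
  moreover have "{s\<in>{0..1}. h s = 0} \<in> sets lebesgue"
    using closed_Collect_eq[OF h continuous_on_const] by (auto simp: Collect_conj_eq)
  ultimately have "measure lebesgue ({s\<in>{0..1}. h s < 0} \<union> {s\<in>{0..1}. h s = 0})
      \<le> measure lebesgue {s\<in>{0..1}. h s < 0} + measure lebesgue {s\<in>{0..1}. h s = 0}"
    by (rule measure_Un_le)
  moreover have "{s\<in>{0..1}. h s < 0} \<union> {s\<in>{0..1}. h s = 0} = {s\<in>{0..1}. h s \<le> 0}" by auto
  ultimately show ?thesis unfolding circ_measure_sphere h_def[symmetric] by simp
qed

lemma alpha_set_le_alpha_fin: "N \<ge> 1 \<Longrightarrow> alpha_set D \<le> alpha_fin (D \<inter> {1..N})"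
  unfolding alpha_set_def
  by (rule cINF_lower) (auto intro!: bdd_belowI[of _ 0] alpha_fin_nonneg[of _ n for n])

lemma alpha_set_le_measure_Re_le:
  fixes a :: "nat \<Rightarrow> complex" and f :: "complex \<Rightarrow> complex"
  assumes unif: "uniform_limit (sphere 0 1) (\<lambda>n z. \<Sum>k=1..n. a k * z ^ k) f sequentially"
    and cont: "continuous_on (sphere 0 1) f" and "\<epsilon> > 0"
  shows "alpha_set {k. k \<ge> 1 \<and> a k \<noteq> 0} \<le> measure lebesgue {s\<in>{0..1}. Re (f (cis (2 * pi * s))) \<le> \<epsilon>}"
proof -
  from uniform_limitD[OF unif \<open>\<epsilon> > 0\<close>] obtain M where
    M: "\<forall>n\<ge>M. \<forall>z\<in>sphere 0 1. dist (\<Sum>k=1..n. a k * z ^ k) (f z) < \<epsilon>"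
    unfolding eventually_sequentially by blast
  define N where "N = max M 1"
  define p where "p z = (\<Sum>k=1..N. a k * z ^ k)" for z
  have N: "N \<ge> 1" "\<And>z. z \<in> sphere 0 1 \<Longrightarrow> dist (p z) (f z) < \<epsilon>"
    using M by (auto simp: N_def p_def)
  have "alpha_set {k. k \<ge> 1 \<and> a k \<noteq> 0} \<le> alpha_fin ({k. k \<ge> 1 \<and> a k \<noteq> 0} \<inter> {1..N})"
    using N(1) by (rule alpha_set_le_alpha_fin)
  also have "\<dots> \<le> measure lebesgue ({0..1} \<inter> {s. Re (p (cis (2 * pi * s))) \<le> 0})"
    unfolding p_def by (rule alpha_fin_le_measure_poly_nonpos)
  also have "\<dots> \<le> measure lebesgue {s\<in>{0..1}. Re (f (cis (2 * pi * s))) \<le> \<epsilon>}"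
  proof (rule measure_mono_fmeasurable)
    have "closed {s. Re (p (cis (2 * pi * s))) \<le> 0}"
      unfolding p_def by (intro closed_Collect_le continuous_intros)
    then show "{0..1} \<inter> {s. Re (p (cis (2 * pi * s))) \<le> 0} \<in> sets lebesgue" by auto
    show "{s\<in>{0..1}. Re (f (cis (2 * pi * s))) \<le> \<epsilon>} \<in> fmeasurable lebesgue"
      using continuous_on_compose_circle[OF cont]
      by (intro fmeasurable_sublevel compact_Icc continuous_intros)
    show "{0..1} \<inter> {s. Re (p (cis (2 * pi * s))) \<le> 0} \<subseteq> {s\<in>{0..1}. Re (f (cis (2 * pi * s))) \<le> \<epsilon>}"
    proof
      fix s :: real
      define z where "z = cis (2 * pi * s)"
      assume "s \<in> {0..1} \<inter> {s. Re (p (cis (2 * pi * s))) \<le> 0}"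
      then have "s \<in> {0..1}" "Re (p z) \<le> 0" by (simp_all add: z_def)
      moreover have "Re (f z) - Re (p z) \<le> dist (p z) (f z)"
        using abs_Re_le_cmod[of "f z - p z"] by (simp add: dist_norm norm_minus_commute)
      moreover have "dist (p z) (f z) < \<epsilon>" using N(2) by (simp add: z_def)
      ultimately show "s \<in> {s\<in>{0..1}. Re (f (cis (2 * pi * s))) \<le> \<epsilon>}"
        unfolding z_def by simp
    qed
  qed
  finally show ?thesis .
qed

lemma alpha_set_le_circ_measure_nonpos:
  fixes a :: "nat \<Rightarrow> complex" and f :: "complex \<Rightarrow> complex"
  assumes unif: "uniform_limit (sphere 0 1) (\<lambda>n z. \<Sum>k=1..n. a k * z ^ k) f sequentially"
    and cont: "continuous_on (sphere 0 1) f"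
  shows "alpha_set {k. k \<ge> 1 \<and> a k \<noteq> 0} \<le> circ_measure {z \<in> sphere 0 1. Re (f z) \<le> 0}"
proof -
  have "continuous_on UNIV (\<lambda>s. Re (f (cis (2 * pi * s))))"
    using continuous_on_compose_circle[OF cont] by (intro continuous_intros)
  from tendsto_measure_sublevel[OF compact_Icc this]
  have "alpha_set {k. k \<ge> 1 \<and> a k \<noteq> 0} \<le> measure lebesgue {s\<in>{0..1}. Re (f (cis (2 * pi * s))) \<le> 0}"
    by (rule LIMSEQ_le_const) (use alpha_set_le_measure_Re_le[OF unif cont] in auto)
  then show ?thesis unfolding circ_measure_sphere .
qed

theorem theorem5:
  fixes a :: "nat \<Rightarrow> complex" and f :: "complex \<Rightarrow> complex"
  assumes unif: "uniform_limit (sphere 0 1) (\<lambda>n z. \<Sum>k=1..n. a k * z ^ k) f sequentially"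
    and cont: "continuous_on (sphere 0 1) f"
    and zero: "circ_measure {z \<in> sphere 0 1. Re (f z) = 0} = 0"
  shows "alpha_set {k. k \<ge> 1 \<and> a k \<noteq> 0} \<le> min (rho_plus f) (rho_minus f)"
proof -
  have unif_neg: "uniform_limit (sphere 0 1) (\<lambda>n z. \<Sum>k=1..n. (- a k) * z ^ k) (\<lambda>z. - f z) sequentially"
    using uniform_limit_uminus[OF unif] by (simp add: sum_negf)
  have cont_neg: "continuous_on (sphere 0 1) (\<lambda>z. - f z)"
    using cont by (rule continuous_on_minus)
  have "alpha_set {k. k \<ge> 1 \<and> a k \<noteq> 0} \<le> circ_measure {z \<in> sphere 0 1. Re (f z) \<le> 0}"
    by (rule alpha_set_le_circ_measure_nonpos[OF unif cont])
  also have "\<dots> \<le> rho_minus f"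
    using circ_measure_nonpos_le[OF continuous_on_Re[OF cont]] zero by (simp add: rho_minus_def)
  finally have minus: "alpha_set {k. k \<ge> 1 \<and> a k \<noteq> 0} \<le> rho_minus f" .
  have "alpha_set {k. k \<ge> 1 \<and> a k \<noteq> 0} \<le> circ_measure {z \<in> sphere 0 1. Re (- f z) \<le> 0}"
    using alpha_set_le_circ_measure_nonpos[OF unif_neg cont_neg] by simp
  also have "\<dots> \<le> rho_plus f"
    using circ_measure_nonpos_le[OF continuous_on_Re[OF cont_neg]] zero by (simp add: rho_plus_def)
  finally show ?thesis using minus by simp
qed

end
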